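(* Consider the setting in the context with $\mathbf{Q}_\Delta$ given by the LU trick, and assume $\mathbf{A}$ is invertible. For $k\in\mathbb{N}$ let $\mathbf{T}_S(\mu,k)=\big(\mathbf{I}_{LMN}-\hat{\mathbf{P}}^{-1}\mathbf{C}\big)^k$ be the iteration matrix of $k$ smoother iterations. Then the smoother converges if $\mu$ is large enough and at least $M$ iterations are performed: for every $k\ge M$ there exist a fixed value $\mu^*_{S,\infty}>0$ and a constant $c>0$ independent of $\mu$ (but depending on $k$) such that for all $\mu>\mu^*_{S,\infty}$, $$\rho\big(\mathbf{T}_S(\mu,k)\big)\le \frac{c}{\mu}.$$
   Context: Fix positive integers $L$ (time steps), $M$ (collocation nodes), $N$ (spatial degrees of freedom). Let $0<\tau_1<\dots<\tau_M=1$ be the (right) Gauss–Radau nodes on $[0,1]$, $\ell_j$ the Lagrange basis polynomials, $\mathbf{Q}=(q_{m,j})\in\mathbb{R}^{M\times M}$ with $q_{m,j}=\int_0^{\tau_m}\ell_j(s)\,ds$. LU trick: write $\mathbf{Q}^T=\mathbf{L}_Q\mathbf{U}_Q$ with $\mathbf{L}_Q$ unit lower triangular and $\mathbf{U}_Q$ upper triangular, and set $\mathbf{Q}_\Delta=\mathbf{U}_Q^T$. Let $\mathbf{A}\in\mathbb{C}^{N\times N}$ and $\mu>0$ (CFL number). Let $\mathbf{N}_M\in\mathbb{R}^{M\times M}$ have ones in its last column and zeros elsewhere, $\mathbf{H}=\mathbf{N}_M\otimes\mathbf{I}_N$, $\mathbf{E}\in\mathbb{R}^{L\times L}$ with ones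 on the first subdiagonal and zeros elsewhere. $\mathbf{C}=\mathbf{I}_{LMN}-\mu\,\mathbf{I}_L\otimes\mathbf{Q}\otimes\mathbf{A}-\mathbf{E}\otimes\mathbf{H}$, $\hat{\mathbf{P}}=\mathbf{I}_{LMN}-\mu\,\mathbf{I}_L\otimes\mathbf{Q}_\Delta\otimes\mathbf{A}$ (assumed invertible). $\rho$ denotes the spectral radius. *)

theory Defs
  imports "HOL-Analysis.Analysis" "HOL-Computational_Algebra.Polynomial"
    "Jordan_Normal_Form.Spectral_Radius" "Jordan_Normal_Form.Gauss_Jordan_Elimination"
begin

(* Nodes are indexed 0..M-1, i.e. tau 0 = tau_1, ..., tau (M-1) = tau_M. *)

definition lagrange_basis :: "(nat \<Rightarrow> real) \<Rightarrow> nat \<Rightarrow> nat \<Rightarrow> real \<Rightarrow> real" where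
  "lagrange_basis tau M j s = (\<Prod>i\<in>{0..<M} - {j}. (s - tau i) / (tau j - tau i))"

definition right_radau_nodes :: "nat \<Rightarrow> (nat \<Rightarrow> real) \<Rightarrow> bool" where
  "right_radau_nodes M tau \<longleftrightarrow>
     0 < tau 0 \<and> (\<forall>i j. i < j \<and> j < M \<longrightarrow> tau i < tau j) \<and> tau (M - 1) = 1 \<and>
     (\<forall>p :: real poly. degree p \<le> 2 * M - 2 \<longrightarrow>
        integral {0..1} (poly p) =
        (\<Sum>j<M. integral {0..1} (lagrange_basis tau M j) * poly p (tau j)))"

definition coll_Q :: "(nat \<Rightarrow> real) \<Rightarrow> nat \<Rightarrow> real mat" where
  "coll_Q tau M = mat M M (\<lambda>(m, j). integral {0..tau m} (lagrange_basis tau M j))"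

definition kron :: "'a :: times mat \<Rightarrow> 'a mat \<Rightarrow> 'a mat" where
  "kron A B = mat (dim_row A * dim_row B) (dim_col A * dim_col B)
     (\<lambda>(i, j). A $$ (i div dim_row B, j div dim_col B) * B $$ (i mod dim_row B, j mod dim_col B))"

definition unit_lower_triangular :: "'a :: {zero,one} mat \<Rightarrow> bool" where
  "unit_lower_triangular A \<longleftrightarrow>
     (\<forall>i j. i < dim_row A \<and> j < dim_col A \<and> i < j \<longrightarrow> A $$ (i, j) = 0) \<and>
     (\<forall>i. i < dim_row A \<and> i < dim_col A \<longrightarrow> A $$ (i, i) = 1)"

definition last_col_ones :: "nat \<Rightarrow> complex mat" where
  "last_col_ones M = mat M M (\<lambda>(i, j). if j = M - 1 then 1 else 0)"

definition subdiag_E :: "nat \<Rightarrow> complex mat" where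
  "subdiag_E L = mat L L (\<lambda>(i, j). if i = j + 1 then 1 else 0)"

definition cmat :: "real mat \<Rightarrow> complex mat" where
  "cmat Q = map_mat complex_of_real Q"

definition composite_C :: "nat \<Rightarrow> nat \<Rightarrow> nat \<Rightarrow> real mat \<Rightarrow> complex mat \<Rightarrow> real \<Rightarrow> complex mat" where
  "composite_C L M N Q A \<mu> =
     1\<^sub>m (L * M * N)
     - complex_of_real \<mu> \<cdot>\<^sub>m kron (1\<^sub>m L) (kron (cmat Q) A)
     - kron (subdiag_E L) (kron (last_col_ones M) (1\<^sub>m N))"

definition precond_P :: "nat \<Rightarrow> nat \<Rightarrow> nat \<Rightarrow> real mat \<Rightarrow> complex mat \<Rightarrow> real \<Rightarrow> complex mat" where
  "precond_P L M N QD A \<mu> =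
     1\<^sub>m (L * M * N) - complex_of_real \<mu> \<cdot>\<^sub>m kron (1\<^sub>m L) (kron (cmat QD) A)"

definition smoother_T :: "nat \<Rightarrow> nat \<Rightarrow> nat \<Rightarrow> real mat \<Rightarrow> real mat \<Rightarrow> complex mat \<Rightarrow> real \<Rightarrow> nat \<Rightarrow> complex mat" where
  "smoother_T L M N Q QD A \<mu> k =
     (1\<^sub>m (L * M * N) - the (mat_inverse (precond_P L M N QD A \<mu>)) * composite_C L M N Q A \<mu>) ^\<^sub>m k"

end

theory Submission
  imports Defs
begin

text \<open>Write \<open>Q = Q\<^sub>\<Delta> L\<^sub>Q\<^sup>T\<close>, so that \<open>I \<otimes> Q \<otimes> A = B K\<close> with \<open>B = I \<otimes> Q\<^sub>\<Delta> \<otimes> A\<close> and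
  \<open>K = I \<otimes> L\<^sub>Q\<^sup>T \<otimes> I\<close>. Then \<open>C = P K - R\<close> with \<open>R = K - I + E \<otimes> H\<close>, so the one-step iteration
  matrix is \<open>N + P\<^sup>-\<^sup>1 R\<close>, where \<open>N = I - K\<close> is nilpotent of index at most \<open>M\<close> because \<open>L\<^sub>Q\<close> is
  unit lower triangular. The collocation matrix of distinct positive nodes is nonsingular,
  hence so are \<open>Q\<^sub>\<Delta>\<close> and \<open>B\<close>, and therefore \<open>P\<^sup>-\<^sup>1 = (I - \<mu> B)\<^sup>-\<^sup>1 = O(1/\<mu>)\<close>. For \<open>k \<ge> M\<close>
  every term in the expansion of \<open>(N + P\<^sup>-\<^sup>1 R)\<^sup>k\<close> other than \<open>N\<^sup>k = 0\<close> contains the factor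
  \<open>P\<^sup>-\<^sup>1 R = O(1/\<mu>)\<close>; the spectral radius is bounded by the entrywise \<open>\<ell>\<^sub>1\<close> norm.\<close>

subsection \<open>Kronecker products\<close>

lemma kron_carrier_mat:
  "A \<in> carrier_mat a b \<Longrightarrow> B \<in> carrier_mat c d \<Longrightarrow> kron A B \<in> carrier_mat (a * c) (b * d)"
  unfolding kron_def by auto

lemma dim_kron [simp]:
  "dim_row (kron A B) = dim_row A * dim_row B" "dim_col (kron A B) = dim_col A * dim_col B"
  unfolding kron_def by simp_all

lemma index_kron:
  "i < dim_row A * dim_row B \<Longrightarrow> j < dim_col A * dim_col B \<Longrightarrow>
   kron A B $$ (i, j) = A $$ (i div dim_row B, j div dim_col B) * B $$ (i mod dim_row B, j mod dim_col B)"
  unfolding kron_def by simp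

lemma div_mod_less_mult:
  "i < a * (b :: nat) \<Longrightarrow> i div b < a \<and> i mod b < b"
  by (metis less_mult_imp_div_less mod_less_divisor mult_zero_right not_less_zero zero_less_iff_neq_zero)

lemma sum_lessThan_mult:
  "(\<Sum>j<a * b. (f :: nat \<Rightarrow> 'a :: comm_monoid_add) j) = (\<Sum>m<a. \<Sum>t<b. f (m * b + t))"
proof -
  have "(\<Sum>j<a * b. f j) = (\<Sum>m<a. sum f {m * b..<m * b + b})"
    using sum.nat_group[of f b a] by simp
  also have "\<dots> = (\<Sum>m<a. \<Sum>t<b. f (m * b + t))"
  proof (rule sum.cong [OF refl])
    fix m
    have "sum f {m * b..<m * b + b} = sum (\<lambda>t. f (t + m * b)) {0..<b}"
      using sum.shift_bounds_nat_ivl[of f 0 "m * b" b] by (simp add: add.commute)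
    then show "sum f {m * b..<m * b + b} = (\<Sum>t<b. f (m * b + t))"
      by (simp add: atLeast0LessThan add.commute)
  qed
  finally show ?thesis .
qed

lemma kron_mult_kron:
  fixes A B C D :: "'a :: comm_ring_1 mat"
  assumes A: "A \<in> carrier_mat a1 a2" and C: "C \<in> carrier_mat a2 a3"
    and B: "B \<in> carrier_mat b1 b2" and D: "D \<in> carrier_mat b2 b3"
  shows "kron A B * kron C D = kron (A * C) (B * D)"
proof (rule eq_matI)
  fix i k assume "i < dim_row (kron (A * C) (B * D))" "k < dim_col (kron (A * C) (B * D))"
  then have i: "i < a1 * b1" and k: "k < a3 * b3" using A B C D by auto
  have entry: "kron A B $$ (i, m * b2 + t) * kron C D $$ (m * b2 + t, k) =
      (A $$ (i div b1, m) * C $$ (m, k div b3)) * (B $$ (i mod b1, t) * D $$ (t, k mod b3))"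
    if m: "m < a2" and t: "t < b2" for m t
  proof -
    have "m * b2 + t < (m + 1) * b2" using t by simp
    also have "\<dots> \<le> a2 * b2" using m by (intro mult_right_mono) auto
    finally have "m * b2 + t < a2 * b2" .
    moreover have "(m * b2 + t) div b2 = m" "(m * b2 + t) mod b2 = t" using t by auto
    ultimately show ?thesis using A B C D i k by (simp add: index_kron ac_simps)
  qed
  have "(kron A B * kron C D) $$ (i, k) = (\<Sum>j<a2 * b2. kron A B $$ (i, j) * kron C D $$ (j, k))"
    using i k A B C D by (simp add: scalar_prod_def atLeast0LessThan)
  also have "\<dots> = (\<Sum>m<a2. \<Sum>t<b2. (A $$ (i div b1, m) * C $$ (m, k div b3)) *
      (B $$ (i mod b1, t) * D $$ (t, k mod b3)))"
    unfolding sum_lessThan_mult by (intro sum.cong refl) (simp add: entry)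
  also have "\<dots> = (\<Sum>m<a2. A $$ (i div b1, m) * C $$ (m, k div b3)) *
      (\<Sum>t<b2. B $$ (i mod b1, t) * D $$ (t, k mod b3))"
    by (simp add: sum_product)
  also have "\<dots> = kron (A * C) (B * D) $$ (i, k)"
    using A B C D i k div_mod_less_mult[OF i] div_mod_less_mult[OF k]
    by (simp add: index_kron scalar_prod_def atLeast0LessThan)
  finally show "(kron A B * kron C D) $$ (i, k) = kron (A * C) (B * D) $$ (i, k)" .
qed (use A B C D in simp_all)

lemma kron_one_one: "kron (1\<^sub>m a) (1\<^sub>m b) = (1\<^sub>m (a * b) :: 'a :: semiring_1 mat)"
proof (rule eq_matI)
  fix i j assume "i < dim_row (1\<^sub>m (a * b) :: 'a mat)" "j < dim_col (1\<^sub>m (a * b) :: 'a mat)"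
  then have i: "i < a * b" and j: "j < a * b" by auto
  have "(i div b = j div b \<and> i mod b = j mod b) \<longleftrightarrow> i = j"
    by (metis div_mult_mod_eq)
  then show "kron (1\<^sub>m a) (1\<^sub>m b) $$ (i, j) = (1\<^sub>m (a * b) :: 'a mat) $$ (i, j)"
    using i j div_mod_less_mult[OF i] div_mod_less_mult[OF j] by (auto simp: index_kron)
qed auto

lemma kron_minus_left:
  "B \<in> carrier_mat p q \<Longrightarrow> C \<in> carrier_mat p q \<Longrightarrow>
   kron (B - C) A = kron B A - kron C (A :: 'a :: comm_ring_1 mat)"
  by (intro eq_matI) (auto simp: index_kron algebra_simps div_mod_less_mult)

lemma kron_minus_right:
  "B \<in> carrier_mat p q \<Longrightarrow> C \<in> carrier_mat p q \<Longrightarrow>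
   kron A (B - C) = kron A B - kron A (C :: 'a :: comm_ring_1 mat)"
  by (intro eq_matI) (auto simp: index_kron algebra_simps div_mod_less_mult)

lemma kron_zero_left: "kron (0\<^sub>m p q) A = (0\<^sub>m (p * dim_row A) (q * dim_col A) :: 'a :: comm_ring_1 mat)"
  by (intro eq_matI) (auto simp: index_kron div_mod_less_mult)

lemma kron_zero_right: "kron A (0\<^sub>m p q) = (0\<^sub>m (dim_row A * p) (dim_col A * q) :: 'a :: comm_ring_1 mat)"
  by (intro eq_matI) (auto simp: index_kron div_mod_less_mult)

lemma kron_pow_mat:
  fixes A B :: "'a :: comm_ring_1 mat"
  assumes A: "A \<in> carrier_mat a a" and B: "B \<in> carrier_mat b b"
  shows "kron A B ^\<^sub>m k = kron (A ^\<^sub>m k) (B ^\<^sub>m k)"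
proof (induction k)
  case 0
  show ?case using A B by (simp add: kron_one_one)
next
  case (Suc k)
  have "kron A B ^\<^sub>m Suc k = kron (A ^\<^sub>m k) (B ^\<^sub>m k) * kron A B"
    using Suc by simp
  also have "\<dots> = kron (A ^\<^sub>m Suc k) (B ^\<^sub>m Suc k)"
    using A B by (simp add: kron_mult_kron[of _ a a _ a _ b b _ b])
  finally show ?case .
qed

lemma kron_one_kron_mult:
  fixes X X' Y Y' :: "'a :: comm_ring_1 mat"
  assumes "X \<in> carrier_mat m1 m2" "X' \<in> carrier_mat m2 m3" "Y \<in> carrier_mat p1 p2" "Y' \<in> carrier_mat p2 p3"
  shows "kron (1\<^sub>m l) (kron X Y) * kron (1\<^sub>m l) (kron X' Y') = kron (1\<^sub>m l) (kron (X * X') (Y * Y'))"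
  using kron_mult_kron[OF one_carrier_mat one_carrier_mat kron_carrier_mat kron_carrier_mat, OF assms(1,3,2,4)]
    kron_mult_kron[OF assms(1,2,3,4)]
  by simp

subsection \<open>The entrywise \<open>\<ell>\<^sub>1\<close> norm\<close>

definition entry_norm :: "'a :: real_normed_field mat \<Rightarrow> real" where
  "entry_norm X = (\<Sum>i<dim_row X. \<Sum>j<dim_col X. norm (X $$ (i, j)))"

lemma entry_norm_nonneg: "0 \<le> entry_norm X"
  unfolding entry_norm_def by (intro sum_nonneg) auto

lemma row_norm_le_entry_norm:
  "i < dim_row X \<Longrightarrow> (\<Sum>j<dim_col X. norm (X $$ (i, j))) \<le> entry_norm X"
  unfolding entry_norm_def by (rule member_le_sum) (auto intro: sum_nonneg)

lemma entry_norm_add_le: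
  assumes "A \<in> carrier_mat n m" and "B \<in> carrier_mat n m"
  shows "entry_norm (A + B) \<le> entry_norm A + entry_norm B"
proof -
  have "entry_norm (A + B) = (\<Sum>i<n. \<Sum>j<m. norm (A $$ (i, j) + B $$ (i, j)))"
    unfolding entry_norm_def using assms by simp
  also have "\<dots> \<le> (\<Sum>i<n. \<Sum>j<m. norm (A $$ (i, j)) + norm (B $$ (i, j)))"
    by (intro sum_mono norm_triangle_ineq)
  also have "\<dots> = entry_norm A + entry_norm B"
    unfolding entry_norm_def using assms by (simp add: sum.distrib)
  finally show ?thesis .
qed

lemma entry_norm_diff_le:
  assumes "A \<in> carrier_mat n m" and "B \<in> carrier_mat n m"
  shows "entry_norm (A - B) \<le> entry_norm A + entry_norm B"
proof -
  have "entry_norm (A - B) = (\<Sum>i<n. \<Sum>j<m. norm (A $$ (i, j) - B $$ (i, j)))"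
    unfolding entry_norm_def using assms by simp
  also have "\<dots> \<le> (\<Sum>i<n. \<Sum>j<m. norm (A $$ (i, j)) + norm (B $$ (i, j)))"
    by (intro sum_mono norm_triangle_ineq4)
  also have "\<dots> = entry_norm A + entry_norm B"
    unfolding entry_norm_def using assms by (simp add: sum.distrib)
  finally show ?thesis .
qed

lemma entry_norm_smult: "entry_norm (c \<cdot>\<^sub>m A) = norm c * entry_norm A"
  unfolding entry_norm_def by (simp add: sum_distrib_left norm_mult)

lemma entry_norm_mult_le:
  assumes A: "A \<in> carrier_mat n m" and B: "B \<in> carrier_mat m p"
  shows "entry_norm (A * B) \<le> entry_norm A * entry_norm B"
proof -
  have "entry_norm (A * B) = (\<Sum>i<n. \<Sum>k<p. norm (\<Sum>j<m. A $$ (i, j) * B $$ (j, k)))"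
    unfolding entry_norm_def using A B by (simp add: scalar_prod_def atLeast0LessThan)
  also have "\<dots> \<le> (\<Sum>i<n. \<Sum>k<p. \<Sum>j<m. norm (A $$ (i, j)) * norm (B $$ (j, k)))"
    by (intro sum_mono order_trans[OF norm_sum]) (simp add: norm_mult)
  also have "\<dots> = (\<Sum>i<n. \<Sum>j<m. norm (A $$ (i, j)) * (\<Sum>k<p. norm (B $$ (j, k))))"
    by (simp add: sum_distrib_left sum.swap[of _ "{..<p}"])
  also have "\<dots> \<le> (\<Sum>i<n. \<Sum>j<m. norm (A $$ (i, j)) * entry_norm B)"
    using B by (intro sum_mono mult_left_mono) (auto intro: row_norm_le_entry_norm)
  also have "\<dots> = entry_norm A * entry_norm B"
    unfolding entry_norm_def using A by (simp add: sum_distrib_right)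
  finally show ?thesis .
qed

lemma entry_norm_pow_le:
  assumes X: "X \<in> carrier_mat n n"
  shows "entry_norm (X ^\<^sub>m Suc k) \<le> entry_norm X ^ Suc k"
proof (induction k)
  case (Suc k)
  have "entry_norm (X ^\<^sub>m Suc (Suc k)) = entry_norm (X ^\<^sub>m Suc k * X)" by simp
  also have "\<dots> \<le> entry_norm (X ^\<^sub>m Suc k) * entry_norm X"
    using X by (intro entry_norm_mult_le[of _ n n]) auto
  also have "\<dots> \<le> entry_norm X ^ Suc k * entry_norm X"
    using Suc entry_norm_nonneg by (intro mult_right_mono)
  finally show ?case by (simp add: mult.commute)
qed (use X in simp)

lemma pow_mat_Suc_diff:
  fixes X N :: "'a :: comm_ring_1 mat"
  assumes X: "X \<in> carrier_mat n n" and N: "N \<in> carrier_mat n n"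
  shows "X ^\<^sub>m Suc k - N ^\<^sub>m Suc k = (X ^\<^sub>m k - N ^\<^sub>m k) * X + N ^\<^sub>m k * (X - N)"
proof -
  have Xk: "X ^\<^sub>m k \<in> carrier_mat n n" and Nk: "N ^\<^sub>m k \<in> carrier_mat n n"
    using X N by auto
  have "(X ^\<^sub>m k - N ^\<^sub>m k) * X + N ^\<^sub>m k * (X - N)
      = (X ^\<^sub>m k * X - N ^\<^sub>m k * X) + (N ^\<^sub>m k * X - N ^\<^sub>m k * N)"
    by (simp only: minus_mult_distrib_mat[OF Xk Nk X] mult_minus_distrib_mat[OF Nk X N])
  also have "\<dots> = X ^\<^sub>m Suc k - N ^\<^sub>m Suc k"
    using mult_carrier_mat[OF Xk X] mult_carrier_mat[OF Nk X] mult_carrier_mat[OF Nk N]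
    by (intro eq_matI) (simp_all only: pow_mat.simps index_add_mat index_minus_mat carrier_matD, auto)
  finally show ?thesis ..
qed

lemma entry_norm_pow_diff_le:
  assumes X: "X \<in> carrier_mat n n" and N: "N \<in> carrier_mat n n"
  shows "entry_norm (X ^\<^sub>m Suc k - N ^\<^sub>m Suc k)
    \<le> real (Suc k) * entry_norm (X - N) * (entry_norm N + entry_norm (X - N)) ^ k"
proof (induction k)
  case 0
  show ?case using X N by simp
next
  case (Suc k)
  define a r where "a = entry_norm N" and "r = entry_norm (X - N)"
  have a: "0 \<le> a" and r: "0 \<le> r" unfolding a_def r_def by (auto intro: entry_norm_nonneg)
  have Xk: "X ^\<^sub>m Suc k \<in> carrier_mat n n" and Nk: "N ^\<^sub>m Suc k \<in> carrier_mat n n"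
    using X N by auto
  have "X = N + (X - N)" using X N by (intro eq_matI) auto
  then have "entry_norm X = entry_norm (N + (X - N))" by simp
  also have "\<dots> \<le> a + r" unfolding a_def r_def using X N by (intro entry_norm_add_le[of _ n n]) auto
  finally have normX: "entry_norm X \<le> a + r" .
  note split = pow_mat_Suc_diff[OF X N, of "Suc k"]
  have "entry_norm (X ^\<^sub>m Suc (Suc k) - N ^\<^sub>m Suc (Suc k))
      \<le> entry_norm ((X ^\<^sub>m Suc k - N ^\<^sub>m Suc k) * X) + entry_norm (N ^\<^sub>m Suc k * (X - N))"
    unfolding split
    by (rule entry_norm_add_le[OF mult_carrier_mat[OF minus_carrier_mat[OF Nk] X]
          mult_carrier_mat[OF Nk minus_carrier_mat[OF N]]])
  also have "\<dots> \<le> entry_norm (X ^\<^sub>m Suc k - N ^\<^sub>m Suc k) * entry_norm X + entry_norm (N ^\<^sub>m Suc k) * r"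
    unfolding r_def
    by (rule add_mono[OF entry_norm_mult_le[OF minus_carrier_mat[OF Nk] X]
          entry_norm_mult_le[OF Nk minus_carrier_mat[OF N]]])
  also have "\<dots> \<le> (real (Suc k) * r * (a + r) ^ k) * (a + r) + (a + r) ^ Suc k * r"
  proof (rule add_mono)
    show "entry_norm (X ^\<^sub>m Suc k - N ^\<^sub>m Suc k) * entry_norm X \<le> (real (Suc k) * r * (a + r) ^ k) * (a + r)"
      using Suc[folded a_def r_def] normX a r entry_norm_nonneg by (intro mult_mono) auto
    have "entry_norm (N ^\<^sub>m Suc k) \<le> a ^ Suc k"
      unfolding a_def by (rule entry_norm_pow_le[OF N])
    also have "\<dots> \<le> (a + r) ^ Suc k" using a r by (intro power_mono) auto
    finally show "entry_norm (N ^\<^sub>m Suc k) * r \<le> (a + r) ^ Suc k * r"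
      using r by (rule mult_right_mono)
  qed
  also have "\<dots> = real (Suc (Suc k)) * r * (a + r) ^ Suc k" by (simp add: algebra_simps)
  finally show ?case unfolding a_def r_def .
qed

lemma entry_norm_nilpotent_perturbation_pow_le:
  assumes X: "X \<in> carrier_mat n n" and N: "N \<in> carrier_mat n n"
    and nilpotent: "N ^\<^sub>m k = 0\<^sub>m n n" and k: "0 < k"
    and small: "entry_norm (X - N) \<le> 1"
  shows "entry_norm (X ^\<^sub>m k) \<le> real k * (entry_norm N + 1) ^ (k - 1) * entry_norm (X - N)"
proof -
  obtain k' where k': "k = Suc k'" using k by (cases k) auto
  have "X ^\<^sub>m k = X ^\<^sub>m Suc k' - N ^\<^sub>m Suc k'"
    using nilpotent X unfolding k' by (intro eq_matI) auto
  then have "entry_norm (X ^\<^sub>m k)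
      \<le> real k * entry_norm (X - N) * (entry_norm N + entry_norm (X - N)) ^ k'"
    using entry_norm_pow_diff_le[OF X N, of k'] k' by simp
  also have "\<dots> \<le> real k * entry_norm (X - N) * (entry_norm N + 1) ^ k'"
    using small entry_norm_nonneg[of "X - N"] entry_norm_nonneg[of N]
    by (intro mult_left_mono power_mono) auto
  finally show ?thesis unfolding k' by (simp add: ac_simps)
qed

lemma norm_eigenvalue_le_entry_norm:
  assumes A: "A \<in> carrier_mat n n" and ev: "eigenvalue A l"
  shows "norm l \<le> entry_norm A"
proof -
  from ev obtain v where v: "v \<in> carrier_vec n" "v \<noteq> 0\<^sub>v n" "A *\<^sub>v v = l \<cdot>\<^sub>v v"
    unfolding eigenvalue_def eigenvector_def using A by auto
  have "n \<noteq> 0"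
  proof
    assume "n = 0"
    then have "v = 0\<^sub>v n" using v(1) by (intro eq_vecI) auto
    with v(2) show False ..
  qed
  define vmax where "vmax = Max ((\<lambda>j. norm (v $ j)) ` {..<n})"
  obtain i where i: "i < n" and vi_max: "norm (v $ i) = vmax"
  proof -
    have "vmax \<in> (\<lambda>j. norm (v $ j)) ` {..<n}"
      unfolding vmax_def using \<open>n \<noteq> 0\<close> by (intro Max_in) auto
    then show ?thesis using that by auto
  qed
  have max: "norm (v $ j) \<le> norm (v $ i)" if "j < n" for j
    unfolding vi_max vmax_def using that by (intro Max_ge) auto
  have "norm (v $ i) \<noteq> 0"
  proof
    assume "norm (v $ i) = 0"
    then have "v = 0\<^sub>v n" using v(1) max by (intro eq_vecI) force+
    with v(2) show False ..
  qed
  then have vi: "0 < norm (v $ i)" by simp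
  have "norm l * norm (v $ i) = norm ((A *\<^sub>v v) $ i)"
    using v i by (simp add: norm_mult)
  also have "\<dots> = norm (\<Sum>j<n. A $$ (i, j) * v $ j)"
    using A v(1) i by (simp add: scalar_prod_def atLeast0LessThan)
  also have "\<dots> \<le> (\<Sum>j<n. norm (A $$ (i, j)) * norm (v $ i))"
    by (rule order_trans[OF norm_sum], intro sum_mono) (auto simp: norm_mult intro!: mult_left_mono max)
  also have "\<dots> \<le> entry_norm A * norm (v $ i)"
    using row_norm_le_entry_norm[of i A] A i vi by (auto simp: sum_distrib_right[symmetric])
  finally show ?thesis using vi by simp
qed

lemma spectral_radius_le_entry_norm:
  assumes A: "A \<in> carrier_mat n n" and n: "0 < n"
  shows "spectral_radius A \<le> entry_norm A"
  using spectral_radius_mem_max(1)[OF A n] norm_eigenvalue_le_entry_norm[OF A]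
  unfolding spectrum_def by auto

subsection \<open>Preconditioned iterations with a nilpotent principal part\<close>

lemma mat_inverse_of_invertible:
  fixes P :: "'a :: field mat"
  assumes P: "P \<in> carrier_mat n n" and invertible: "invertible_mat P"
  shows "P * the (mat_inverse P) = 1\<^sub>m n" "the (mat_inverse P) * P = 1\<^sub>m n"
    "the (mat_inverse P) \<in> carrier_mat n n"
proof -
  have "mat_inverse P \<noteq> None"
  proof
    assume none: "mat_inverse P = None"
    from invertible obtain B where B: "P * B = 1\<^sub>m (dim_row P)" "B * P = 1\<^sub>m (dim_row B)"
      unfolding invertible_mat_def inverts_mat_def by auto
    have "dim_row B = n" "dim_col B = n"
      using P B by (metis carrier_matD index_mult_mat(2,3) index_one_mat(2,3))+
    then have "P \<in> Units (ring_mat TYPE('a) n ())"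
      unfolding Units_def ring_mat_def using P B by auto
    with mat_inverse(1)[OF P none, where b = "()"] show False by blast
  qed
  then obtain Q where "mat_inverse P = Some Q" by auto
  with mat_inverse(2)[OF P this] show "P * the (mat_inverse P) = 1\<^sub>m n"
    "the (mat_inverse P) * P = 1\<^sub>m n" "the (mat_inverse P) \<in> carrier_mat n n" by auto
qed

lemma entry_norm_inverse_shift_le:
  fixes B Binv Pinv :: "'a :: real_normed_field mat"
  assumes B: "B \<in> carrier_mat n n" and Binv: "Binv \<in> carrier_mat n n"
    and Pinv: "Pinv \<in> carrier_mat n n"
    and left_inverse: "Binv * B = 1\<^sub>m n"
    and right_inverse: "(1\<^sub>m n - of_real \<mu> \<cdot>\<^sub>m B) * Pinv = 1\<^sub>m n"
    and \<mu>: "0 < \<mu>" "2 * entry_norm Binv \<le> \<mu>"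
  shows "entry_norm Pinv \<le> 2 * entry_norm Binv / \<mu>"
proof -
  define b p where "b = entry_norm Binv" and "p = entry_norm Pinv"
  have "Binv = Binv * ((1\<^sub>m n - of_real \<mu> \<cdot>\<^sub>m B) * Pinv)"
    using Binv by (simp add: right_inverse)
  also have "(1\<^sub>m n - of_real \<mu> \<cdot>\<^sub>m B) * Pinv = Pinv - of_real \<mu> \<cdot>\<^sub>m (B * Pinv)"
    using B Pinv by (simp add: minus_mult_distrib_mat[OF one_carrier_mat smult_carrier_mat[OF B] Pinv]
        mult_smult_assoc_mat[OF B Pinv])
  also have "Binv * (Pinv - of_real \<mu> \<cdot>\<^sub>m (B * Pinv)) = Binv * Pinv - of_real \<mu> \<cdot>\<^sub>m ((Binv * B) * Pinv)"
    using B Binv Pinv by (simp add: mult_minus_distrib_mat[OF Binv Pinv] mult_smult_distrib[OF Binv mult_carrier_mat[OF B Pinv]])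
  finally have "Binv = Binv * Pinv - of_real \<mu> \<cdot>\<^sub>m Pinv"
    using Pinv by (simp add: left_inverse)
  moreover have "of_real \<mu> \<cdot>\<^sub>m Pinv = Binv * Pinv - (Binv * Pinv - of_real \<mu> \<cdot>\<^sub>m Pinv)"
    using Binv Pinv by (intro eq_matI) auto
  ultimately have scaled: "of_real \<mu> \<cdot>\<^sub>m Pinv = Binv * Pinv - Binv"
    by simp
  have "\<mu> * p = entry_norm (of_real \<mu> \<cdot>\<^sub>m Pinv)"
    unfolding p_def entry_norm_smult using \<mu> by simp
  also have "\<dots> \<le> entry_norm (Binv * Pinv) + b"
    unfolding scaled b_def using Binv Pinv by (intro entry_norm_diff_le[of _ n n]) auto
  also have "\<dots> \<le> b * p + b"
    unfolding b_def p_def using entry_norm_mult_le[OF Binv Pinv] by simp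
  finally have "(\<mu> - b) * p \<le> b" by (simp add: algebra_simps)
  moreover have "(\<mu> / 2) * p \<le> (\<mu> - b) * p"
    using \<mu> entry_norm_nonneg[of Pinv] unfolding b_def p_def by (intro mult_right_mono) auto
  ultimately show ?thesis
    using \<mu> unfolding b_def[symmetric] p_def[symmetric] by (simp add: field_simps)
qed

lemma one_minus_preconditioned_eq:
  fixes B K F P Pinv :: "'a :: comm_ring_1 mat"
  assumes B: "B \<in> carrier_mat n n" and K: "K \<in> carrier_mat n n" and F: "F \<in> carrier_mat n n"
    and Pinv: "Pinv \<in> carrier_mat n n"
    and left_inverse: "Pinv * (1\<^sub>m n - c \<cdot>\<^sub>m B) = 1\<^sub>m n"
  shows "1\<^sub>m n - Pinv * (1\<^sub>m n - c \<cdot>\<^sub>m (B * K) - F) = (1\<^sub>m n - K) + Pinv * (K - 1\<^sub>m n + F)"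
proof -
  define P R where "P = 1\<^sub>m n - c \<cdot>\<^sub>m B" and "R = K - 1\<^sub>m n + F"
  have P: "P \<in> carrier_mat n n" and R: "R \<in> carrier_mat n n"
    unfolding P_def R_def using B K F by auto
  have "P * K = K - c \<cdot>\<^sub>m (B * K)"
    unfolding P_def using B K by (simp add: minus_mult_distrib_mat[of _ n n] mult_smult_assoc_mat[of _ n n])
  then have "1\<^sub>m n - c \<cdot>\<^sub>m (B * K) - F = P * K - R"
    unfolding R_def using B K F by (intro eq_matI) auto
  then have "Pinv * (1\<^sub>m n - c \<cdot>\<^sub>m (B * K) - F) = K - Pinv * R"
    using P K R Pinv left_inverse[folded P_def]
    by (simp add: mult_minus_distrib_mat[OF Pinv mult_carrier_mat[OF P K] R]
        assoc_mult_mat[OF Pinv P K, symmetric])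
  then show ?thesis
    unfolding R_def[symmetric] using K Pinv R by (intro eq_matI) auto
qed

lemma spectral_radius_preconditioned_iteration_pow_le:
  fixes B Binv K F :: "complex mat"
  assumes B: "B \<in> carrier_mat n n" and Binv: "Binv \<in> carrier_mat n n"
    and K: "K \<in> carrier_mat n n" and F: "F \<in> carrier_mat n n" and n: "0 < n"
    and left_inverse: "Binv * B = 1\<^sub>m n"
    and nilpotent: "(1\<^sub>m n - K) ^\<^sub>m k = 0\<^sub>m n n" and k: "0 < k"
  obtains \<mu>s c where "0 < \<mu>s" "0 < c"
    "\<And>\<mu>. \<mu>s < \<mu> \<Longrightarrow> invertible_mat (1\<^sub>m n - of_real \<mu> \<cdot>\<^sub>m B) \<Longrightarrow>
      spectral_radius ((1\<^sub>m n - the (mat_inverse (1\<^sub>m n - of_real \<mu> \<cdot>\<^sub>m B))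
        * (1\<^sub>m n - of_real \<mu> \<cdot>\<^sub>m (B * K) - F)) ^\<^sub>m k) \<le> c / \<mu>"
proof -
  define N R where "N = 1\<^sub>m n - K" and "R = K - 1\<^sub>m n + F"
  have N: "N \<in> carrier_mat n n" and R: "R \<in> carrier_mat n n"
    unfolding N_def R_def using K F by auto
  define b r where "b = entry_norm Binv" and "r = entry_norm R"
  have b: "0 \<le> b" and r: "0 \<le> r"
    unfolding b_def r_def by (auto intro: entry_norm_nonneg)
  define \<mu>s c where "\<mu>s = 2 * b * (r + 1) + 1"
    and "c = 2 * real k * (entry_norm N + 1) ^ (k - 1) * b * r + 1"
  have \<mu>s: "0 < \<mu>s" and c: "0 < c"
    unfolding \<mu>s_def c_def using b r entry_norm_nonneg[of N]
    by (auto intro!: add_nonneg_pos mult_nonneg_nonneg)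
  have "spectral_radius ((1\<^sub>m n - the (mat_inverse (1\<^sub>m n - of_real \<mu> \<cdot>\<^sub>m B))
        * (1\<^sub>m n - of_real \<mu> \<cdot>\<^sub>m (B * K) - F)) ^\<^sub>m k) \<le> c / \<mu>"
    if \<mu>: "\<mu>s < \<mu>" and invertible: "invertible_mat (1\<^sub>m n - of_real \<mu> \<cdot>\<^sub>m B)" for \<mu>
  proof -
    define Pinv where "Pinv = the (mat_inverse (1\<^sub>m n - of_real \<mu> \<cdot>\<^sub>m B))"
    have "1\<^sub>m n - of_real \<mu> \<cdot>\<^sub>m B \<in> carrier_mat n n" using B by auto
    note Pinv = mat_inverse_of_invertible[OF this invertible, folded Pinv_def]
    define T where "T = N + Pinv * R"
    have T: "T \<in> carrier_mat n n" unfolding T_def using N R Pinv by auto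
    have "T - N = Pinv * R" unfolding T_def using N R Pinv by (intro eq_matI) auto
    have \<mu>_pos: "0 < \<mu>" using \<mu> \<mu>s by linarith
    have "\<mu>s = 2 * b + 2 * b * r + 1" unfolding \<mu>s_def by (simp add: algebra_simps)
    moreover have "0 \<le> 2 * b * r" using b r by simp
    ultimately have \<mu>_large: "2 * b \<le> \<mu>" "2 * b * r \<le> \<mu>"
      using \<mu> b by linarith+
    have Pinv_small: "entry_norm Pinv \<le> 2 * b / \<mu>"
      unfolding b_def
      by (rule entry_norm_inverse_shift_le[OF B Binv Pinv(3) left_inverse Pinv(1) \<mu>_pos])
        (use \<mu>_large in \<open>simp add: b_def\<close>)
    have "entry_norm (T - N) \<le> entry_norm Pinv * r"
      unfolding \<open>T - N = Pinv * R\<close> r_def by (rule entry_norm_mult_le[OF Pinv(3) R])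
    also have "\<dots> \<le> 2 * b / \<mu> * r" by (rule mult_right_mono[OF Pinv_small r])
    finally have small: "entry_norm (T - N) \<le> 2 * b * r / \<mu>" by simp
    moreover have "2 * b * r / \<mu> \<le> 1"
      using \<mu>_large \<mu>_pos by simp
    ultimately have "entry_norm (T ^\<^sub>m k) \<le> real k * (entry_norm N + 1) ^ (k - 1) * entry_norm (T - N)"
      by (intro entry_norm_nilpotent_perturbation_pow_le[OF T N nilpotent[folded N_def] k]) simp
    also have "\<dots> \<le> real k * (entry_norm N + 1) ^ (k - 1) * (2 * b * r / \<mu>)"
      using small entry_norm_nonneg[of N] by (intro mult_left_mono) auto
    also have "\<dots> \<le> c / \<mu>"
      unfolding c_def using \<mu>_pos by (simp add: divide_right_mono)
    finally have "spectral_radius (T ^\<^sub>m k) \<le> c / \<mu>"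
      using spectral_radius_le_entry_norm[of "T ^\<^sub>m k" n] T n by fastforce
    moreover have "1\<^sub>m n - Pinv * (1\<^sub>m n - of_real \<mu> \<cdot>\<^sub>m (B * K) - F) = T"
      unfolding T_def N_def R_def by (rule one_minus_preconditioned_eq[OF B K F Pinv(3) Pinv(2)])
    ultimately show ?thesis unfolding Pinv_def by simp
  qed
  with \<mu>s c that show thesis by blast
qed

subsection \<open>Nonsingularity of the collocation matrix\<close>

definition lagrange_poly :: "(nat \<Rightarrow> real) \<Rightarrow> nat \<Rightarrow> nat \<Rightarrow> real poly" where
  "lagrange_poly tau M j =
     Polynomial.smult (1 / (\<Prod>i\<in>{0..<M} - {j}. tau j - tau i)) (\<Prod>i\<in>{0..<M} - {j}. [:- tau i, 1:])"

lemma poly_lagrange_poly: "poly (lagrange_poly tau M j) = lagrange_basis tau M j"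
  unfolding lagrange_poly_def lagrange_basis_def by (simp add: fun_eq_iff poly_prod prod_dividef)

lemma degree_lagrange_poly_less:
  assumes "j < M"
  shows "degree (lagrange_poly tau M j) < M"
proof -
  have "degree (lagrange_poly tau M j) \<le> degree (\<Prod>i\<in>{0..<M} - {j}. [:- tau i, 1:])"
    unfolding lagrange_poly_def by (rule degree_smult_le)
  also have "\<dots> \<le> sum (degree \<circ> (\<lambda>i. [:- tau i, 1:])) ({0..<M} - {j})"
    by (rule degree_prod_sum_le) simp
  also have "\<dots> < M" using assms by (simp add: card_Diff_singleton)
  finally show ?thesis .
qed

lemma lagrange_basis_node:
  assumes "inj_on tau {..<M}" and "j < M" and "k < M"
  shows "lagrange_basis tau M j (tau k) = (if j = k then 1 else 0)"
proof (cases "j = k")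
  case True
  have "tau j \<noteq> tau i" if "i \<in> {0..<M} - {j}" for i
    using assms(1,2) that by (auto dest: inj_onD)
  then show ?thesis using True unfolding lagrange_basis_def by (simp add: prod.neutral)
next
  case False
  then have "k \<in> {0..<M} - {j}" using assms(3) by auto
  then show ?thesis using False unfolding lagrange_basis_def by (auto intro: prod_zero)
qed

lemma exists_pderiv_eq: "\<exists>F. pderiv F = (p :: real poly) \<and> degree F \<le> Suc (degree p)"
proof -
  define F where "F = Poly (0 # map (\<lambda>i. coeff p i / real (Suc i)) [0..<Suc (degree p)])"
  have coeff_F: "coeff F (Suc n) = (if n < Suc (degree p) then coeff p n / real (Suc n) else 0)" for n
    unfolding F_def by (simp del: upt_Suc add: nth_default_def)
  have "pderiv F = p"
    by (rule poly_eqI) (auto simp: coeff_pderiv coeff_F coeff_eq_0)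
  moreover have "degree F \<le> Suc (degree p)"
  proof (rule degree_le, intro allI impI)
    fix i assume "Suc (degree p) < i"
    then obtain n where "i = Suc n" "Suc (degree p) \<le> n" by (cases i) auto
    then show "coeff F i = 0" using coeff_F[of n] by simp
  qed
  ultimately show ?thesis by blast
qed

lemma integral_poly_pderiv:
  assumes "pderiv F = (p :: real poly)" and "0 \<le> x"
  shows "integral {0..x} (poly p) = poly F x - poly F 0"
proof (rule integral_unique, rule fundamental_theorem_of_calculus[OF assms(2)])
  fix y :: real
  have "(poly F has_real_derivative poly p y) (at y within {0..x})"
    using poly_DERIV[of F y] assms(1) by (auto intro: has_field_derivative_at_within)
  then show "(poly F has_vector_derivative poly p y) (at y within {0..x})"
    by (simp add: has_real_derivative_iff_has_vector_derivative)
qed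

text \<open>An antiderivative of \<open>p\<close> vanishing at \<open>0\<close> has the \<open>M + 1\<close> roots \<open>0, \<tau>\<^sub>1, \<dots>, \<tau>\<^sub>M\<close>
  but degree at most \<open>M\<close>.\<close>

lemma poly_eq_0_if_integrals_vanish:
  fixes p :: "real poly"
  assumes degree: "degree p < M" and inj: "inj_on tau {..<M}"
    and pos: "\<And>m. m < M \<Longrightarrow> 0 < tau m"
    and vanish: "\<And>m. m < M \<Longrightarrow> integral {0..tau m} (poly p) = 0"
  shows "p = 0"
proof -
  obtain F where F: "pderiv F = p" "degree F \<le> Suc (degree p)"
    using exists_pderiv_eq by blast
  define G where "G = F - [:poly F 0:]"
  have pderiv_G: "pderiv G = p" unfolding G_def using F(1) by (simp add: pderiv_diff pderiv_pCons)
  have degree_G: "degree G \<le> M"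
    unfolding G_def using F(2) degree by (intro degree_diff_le) auto
  have roots: "insert 0 (tau ` {..<M}) \<subseteq> {x. poly G x = 0}"
    using integral_poly_pderiv[OF F(1), of "tau _"] pos vanish
    by (auto simp: G_def less_imp_le)
  have "0 \<notin> tau ` {..<M}" using pos by fastforce
  then have "card (insert 0 (tau ` {..<M})) = Suc M"
    using card_image[OF inj] by simp
  have "G = 0"
  proof (rule ccontr)
    assume "G \<noteq> 0"
    then have "card (insert 0 (tau ` {..<M})) \<le> card {x. poly G x = 0}"
      by (intro card_mono[OF poly_roots_finite roots])
    also have "\<dots> \<le> degree G" by (rule card_poly_roots_bound[OF \<open>G \<noteq> 0\<close>])
    finally show False
      using \<open>card (insert 0 (tau ` {..<M})) = Suc M\<close> degree_G by simp
  qed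
  then show ?thesis using pderiv_G by simp
qed

lemma det_coll_Q_neq_0:
  assumes "0 < M" and pos: "0 < tau 0" and increasing: "\<And>i j. i < j \<Longrightarrow> j < M \<Longrightarrow> tau i < tau j"
  shows "det (coll_Q tau M) \<noteq> 0"
proof
  have Q: "coll_Q tau M \<in> carrier_mat M M" unfolding coll_Q_def by simp
  have inj: "inj_on tau {..<M}"
    by (rule inj_onI) (metis increasing lessThan_iff linorder_neqE_nat less_irrefl)
  have tau_pos: "0 < tau m" if "m < M" for m
    using pos increasing[of 0 m] that by (cases m) auto
  assume "det (coll_Q tau M) = 0"
  then obtain v where v: "v \<in> carrier_vec M" "v \<noteq> 0\<^sub>v M" "coll_Q tau M *\<^sub>v v = 0\<^sub>v M"
    using det_0_iff_vec_prod_zero_field[OF Q] by auto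
  define p where "p = (\<Sum>j<M. Polynomial.smult (v $ j) (lagrange_poly tau M j))"
  have poly_p: "poly p s = (\<Sum>j<M. v $ j * lagrange_basis tau M j s)" for s
    unfolding p_def by (simp add: poly_sum poly_lagrange_poly)
  have "degree p < M"
    unfolding p_def using degree_lagrange_poly_less
    using \<open>0 < M\<close> by (intro degree_sum_less) (auto intro: le_less_trans[OF degree_smult_le])
  moreover have "integral {0..tau m} (poly p) = 0" if m: "m < M" for m
  proof -
    have "integral {0..tau m} (poly p) = (\<Sum>j<M. integral {0..tau m} (\<lambda>s. v $ j * lagrange_basis tau M j s))"
      unfolding poly_p[abs_def] poly_lagrange_poly[symmetric]
      by (intro integral_sum) (auto intro!: integrable_continuous_interval continuous_intros)
    also have "\<dots> = (coll_Q tau M *\<^sub>v v) $ m"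
      using m v(1) by (simp add: coll_Q_def scalar_prod_def atLeast0LessThan mult.commute)
    finally show ?thesis using v(3) m by simp
  qed
  ultimately have "p = 0" using poly_eq_0_if_integrals_vanish inj tau_pos by blast
  have "v $ k = 0" if k: "k < M" for k
  proof -
    have "v $ k = (\<Sum>j<M. v $ j * (if j = k then 1 else 0))"
      using k by (simp add: if_distrib cong: if_cong)
    also have "\<dots> = poly p (tau k)"
      unfolding poly_p using lagrange_basis_node[OF inj _ k] by (intro sum.cong) auto
    finally show ?thesis using \<open>p = 0\<close> by simp
  qed
  then have "v = 0\<^sub>v M" using v(1) by (intro eq_vecI) auto
  with v(2) show False ..
qed

subsection \<open>The collocation and preconditioner operators\<close>

lemma det_unit_lower_triangular:
  assumes A: "A \<in> carrier_mat n n" and "unit_lower_triangular (A :: 'a :: comm_ring_1 mat)"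
  shows "det A = 1"
proof -
  have "det A = prod_list (diag_mat A)"
    using assms by (intro det_lower_triangular[OF _ A]) (auto simp: unit_lower_triangular_def)
  also have "diag_mat A = replicate n 1"
    using assms by (auto simp: unit_lower_triangular_def diag_mat_def intro: nth_equalityI)
  finally show ?thesis by simp
qed

lemma strictly_upper_triangular_pow_eq_0:
  fixes X :: "'a :: comm_ring_1 mat"
  assumes X: "X \<in> carrier_mat m m"
    and strictly_upper: "\<And>i j. i < m \<Longrightarrow> j < m \<Longrightarrow> j \<le> i \<Longrightarrow> X $$ (i, j) = 0"
    and "m \<le> k"
  shows "X ^\<^sub>m k = 0\<^sub>m m m"
proof -
  have "(X ^\<^sub>m k) $$ (i, j) = 0" if "i < m" "j < m" "j < i + k" for i j k
    using that
  proof (induction k arbitrary: j)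
    case (Suc k)
    have "(X ^\<^sub>m Suc k) $$ (i, j) = (\<Sum>l<m. (X ^\<^sub>m k) $$ (i, l) * X $$ (l, j))"
      using X Suc.prems by (simp add: scalar_prod_def atLeast0LessThan)
    also have "\<dots> = 0"
    proof (intro sum.neutral ballI)
      fix l assume "l \<in> {..<m}"
      then show "(X ^\<^sub>m k) $$ (i, l) * X $$ (l, j) = 0"
        using Suc.IH[of l] strictly_upper[of l j] Suc.prems by (cases "l < i + k") auto
    qed
    finally show ?case .
  qed (use X in simp)
  then show ?thesis using X \<open>m \<le> k\<close> by (intro eq_matI) auto
qed

lemma det_transpose_upper_LU_factor:
  fixes Q LQ UQ :: "'a :: comm_ring_1 mat"
  assumes Q: "Q \<in> carrier_mat n n" and LQ: "LQ \<in> carrier_mat n n" and UQ: "UQ \<in> carrier_mat n n"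
    and "unit_lower_triangular LQ" and LU: "transpose_mat Q = LQ * UQ"
  shows "det (transpose_mat UQ) = det Q"
proof -
  have "det Q = det (LQ * UQ)" unfolding LU[symmetric] by (rule det_transpose[OF Q, symmetric])
  also have "\<dots> = det UQ" using assms by (simp add: det_mult[OF LQ UQ] det_unit_lower_triangular)
  finally show ?thesis using det_transpose[OF UQ] by simp
qed

lemma precond_operator_left_invertible:
  fixes QD :: "real mat" and A :: "complex mat"
  assumes QD: "QD \<in> carrier_mat M M" "det QD \<noteq> 0" and A: "A \<in> carrier_mat N N" "invertible_mat A"
  obtains Binv where "Binv \<in> carrier_mat (L * M * N) (L * M * N)"
    "Binv * kron (1\<^sub>m L) (kron (cmat QD) A) = 1\<^sub>m (L * M * N)"
proof -
  have cQD: "cmat QD \<in> carrier_mat M M" "det (cmat QD) \<noteq> 0"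
    using QD unfolding cmat_def by (auto simp: of_real_hom.hom_det)
  then have "cmat QD \<in> Units (ring_mat TYPE(complex) M ())"
    by (intro det_non_zero_imp_unit)
  then obtain QDi where QDi: "QDi \<in> carrier_mat M M" "QDi * cmat QD = 1\<^sub>m M"
    unfolding Units_def ring_mat_def by auto
  note Ai = mat_inverse_of_invertible[OF A]
  have "kron (1\<^sub>m L) (kron QDi (the (mat_inverse A))) * kron (1\<^sub>m L) (kron (cmat QD) A)
      = 1\<^sub>m (L * M * N)"
    by (simp add: kron_one_kron_mult[OF QDi(1) cQD(1) Ai(3) A(1)] QDi(2) Ai(2) kron_one_one mult.assoc)
  moreover have "kron (1\<^sub>m L) (kron QDi (the (mat_inverse A))) \<in> carrier_mat (L * M * N) (L * M * N)"
    using QDi Ai by (simp add: kron_carrier_mat mult.assoc)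
  ultimately show thesis using that by blast
qed

lemma collocation_operator_factor:
  fixes A :: "complex mat"
  assumes LQ: "LQ \<in> carrier_mat M M" and UQ: "UQ \<in> carrier_mat M M" and A: "A \<in> carrier_mat N N"
    and LU: "transpose_mat Q = LQ * UQ"
  shows "kron (1\<^sub>m L) (kron (cmat Q) A)
    = kron (1\<^sub>m L) (kron (cmat (transpose_mat UQ)) A) * kron (1\<^sub>m L) (kron (cmat (transpose_mat LQ)) (1\<^sub>m N))"
proof -
  have "Q = transpose_mat UQ * transpose_mat LQ"
    by (metis LU LQ UQ transpose_mult transpose_transpose)
  then have "cmat Q = cmat (transpose_mat UQ) * cmat (transpose_mat LQ)"
    using LQ UQ unfolding cmat_def by (intro eq_matI) (auto simp: scalar_prod_def of_real_sum)
  moreover have "cmat (transpose_mat UQ) \<in> carrier_mat M M" "cmat (transpose_mat LQ) \<in> carrier_mat M M"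
    using LQ UQ unfolding cmat_def by auto
  ultimately show ?thesis
    using A by (simp add: kron_one_kron_mult[OF _ _ A one_carrier_mat])
qed

lemma one_minus_kron_unit_lower_pow_eq_0:
  assumes LQ: "LQ \<in> carrier_mat M M" and "unit_lower_triangular LQ" and "M \<le> k"
  shows "(1\<^sub>m (L * M * N) - kron (1\<^sub>m L) (kron (cmat (transpose_mat LQ)) (1\<^sub>m N))) ^\<^sub>m k
    = 0\<^sub>m (L * M * N) (L * M * N)"
proof -
  define U where "U = cmat (transpose_mat LQ)"
  have U: "U \<in> carrier_mat M M" and V: "1\<^sub>m M - U \<in> carrier_mat M M"
    unfolding U_def cmat_def using LQ by auto
  have "(1\<^sub>m M - U) ^\<^sub>m k = 0\<^sub>m M M"
    using LQ assms(2,3) U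
    by (intro strictly_upper_triangular_pow_eq_0) (auto simp: U_def cmat_def unit_lower_triangular_def)
  then have "kron (1\<^sub>m L) (kron (1\<^sub>m M - U) (1\<^sub>m N)) ^\<^sub>m k = 0\<^sub>m (L * M * N) (L * M * N)"
    unfolding kron_pow_mat[OF one_carrier_mat kron_carrier_mat[OF V one_carrier_mat]]
      kron_pow_mat[OF V one_carrier_mat]
    by (simp add: kron_zero_left kron_zero_right mult.assoc)
  moreover have "kron (1\<^sub>m L) (kron (1\<^sub>m M - U) (1\<^sub>m N)) = 1\<^sub>m (L * M * N) - kron (1\<^sub>m L) (kron U (1\<^sub>m N))"
    unfolding kron_minus_left[OF one_carrier_mat U]
      kron_minus_right[OF kron_carrier_mat[OF one_carrier_mat one_carrier_mat] kron_carrier_mat[OF U one_carrier_mat]]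
    by (simp add: kron_one_one mult.assoc)
  ultimately show ?thesis unfolding U_def by simp
qed

theorem lemma2:
  fixes L M N :: nat and tau :: "nat \<Rightarrow> real" and LQ UQ :: "real mat" and A :: "complex mat"
  assumes "0 < L" and "0 < M" and "0 < N"
    and "right_radau_nodes M tau"
    and "LQ \<in> carrier_mat M M" and "UQ \<in> carrier_mat M M"
    and "unit_lower_triangular LQ" and "upper_triangular UQ"
    and "transpose_mat (coll_Q tau M) = LQ * UQ"
    and "A \<in> carrier_mat N N" and "invertible_mat A"
  shows "\<forall>k \<ge> M. \<exists>\<mu>s > 0. \<exists>c > 0. \<forall>\<mu> > \<mu>s.
           invertible_mat (precond_P L M N (transpose_mat UQ) A \<mu>) \<longrightarrow>
           spectral_radius (smoother_T L M N (coll_Q tau M) (transpose_mat UQ) A \<mu> k) \<le> c / \<mu>"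
proof (intro allI impI)
  fix k assume "M \<le> k"
  define B K F where "B = kron (1\<^sub>m L) (kron (cmat (transpose_mat UQ)) A)"
    and "K = kron (1\<^sub>m L) (kron (cmat (transpose_mat LQ)) (1\<^sub>m N))"
    and "F = kron (subdiag_E L) (kron (last_col_ones M) (1\<^sub>m N))"
  have carriers: "B \<in> carrier_mat (L * M * N) (L * M * N)" "K \<in> carrier_mat (L * M * N) (L * M * N)"
    "F \<in> carrier_mat (L * M * N) (L * M * N)"
    using assms(5,6,10) unfolding B_def K_def F_def cmat_def subdiag_E_def last_col_ones_def
    by (auto simp: kron_carrier_mat mult.assoc)
  have "det (transpose_mat UQ) = det (coll_Q tau M)"
    using assms(5-7,9) by (intro det_transpose_upper_LU_factor) (auto simp: coll_Q_def)
  also have "\<dots> \<noteq> 0"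
    using assms(2,4) by (intro det_coll_Q_neq_0) (auto simp: right_radau_nodes_def)
  finally have "det (transpose_mat UQ) \<noteq> 0" .
  then obtain Binv where Binv: "Binv \<in> carrier_mat (L * M * N) (L * M * N)" "Binv * B = 1\<^sub>m (L * M * N)"
    unfolding B_def using assms(6,10,11) by (metis precond_operator_left_invertible transpose_carrier_mat)
  obtain \<mu>s c where "0 < \<mu>s" "0 < c" and bound: "\<And>\<mu>. \<mu>s < \<mu> \<Longrightarrow>
      invertible_mat (1\<^sub>m (L * M * N) - of_real \<mu> \<cdot>\<^sub>m B) \<Longrightarrow>
      spectral_radius ((1\<^sub>m (L * M * N) - the (mat_inverse (1\<^sub>m (L * M * N) - of_real \<mu> \<cdot>\<^sub>m B))
        * (1\<^sub>m (L * M * N) - of_real \<mu> \<cdot>\<^sub>m (B * K) - F)) ^\<^sub>m k) \<le> c / \<mu>"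
  proof (rule spectral_radius_preconditioned_iteration_pow_le[OF carriers(1) Binv(1) carriers(2,3) _ Binv(2)])
    show "(1\<^sub>m (L * M * N) - K) ^\<^sub>m k = 0\<^sub>m (L * M * N) (L * M * N)"
      unfolding K_def using assms(5,7) \<open>M \<le> k\<close> by (rule one_minus_kron_unit_lower_pow_eq_0)
  qed (use assms(1-3) \<open>M \<le> k\<close> in auto)
  have "kron (1\<^sub>m L) (kron (cmat (coll_Q tau M)) A) = B * K"
    unfolding B_def K_def by (rule collocation_operator_factor[OF assms(5,6,10,9)])
  then show "\<exists>\<mu>s > 0. \<exists>c > 0. \<forall>\<mu> > \<mu>s.
           invertible_mat (precond_P L M N (transpose_mat UQ) A \<mu>) \<longrightarrow>
           spectral_radius (smoother_T L M N (coll_Q tau M) (transpose_mat UQ) A \<mu> k) \<le> c / \<mu>"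
    using \<open>0 < \<mu>s\<close> \<open>0 < c\<close> bound
    unfolding smoother_T_def precond_P_def composite_C_def B_def F_def by auto
qed

end
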